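(* Assume Dickson's conjecture. Then the set \[ \left\{ \frac{\varphi(p+1)}{\varphi(p-1)} \,:\, p \text{ and } p+2 \text{ are both prime} \right\} \] is dense in $[0,\infty)$.
   Context: $\varphi$ denotes Euler's totient function. Dickson's conjecture is the following assertion: if $f_1,\dots,f_k \in \mathbb{Z}[t]$ are linear polynomials with positive leading coefficients and the product $f=f_1f_2\cdots f_k$ does not vanish identically modulo any prime (i.e., for every prime $q$ there is an integer $t$ with $q \nmid f(t)$), then there are infinitely many positive integers $t$ for which $f_1(t),\dots,f_k(t)$ are simultaneously prime. *)

theory Defs
  imports "HOL-Computational_Algebra.Computational_Algebra" "HOL-Number_Theory.Number_Theory"
begin

definition dickson_conjecture :: bool where
  "dickson_conjecture \<longleftrightarrow>
    (\<forall>fs :: int poly list.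
       (\<forall>f \<in> set fs. degree f = 1 \<and> lead_coeff f > 0) \<longrightarrow>
       (\<forall>q :: int. prime q \<longrightarrow> (\<exists>t :: int. \<not> q dvd poly (prod_list fs) t)) \<longrightarrow>
       infinite {t :: int. t > 0 \<and> (\<forall>f \<in> set fs. prime (poly f t))})"

end

theory Submission
  imports Defs "HOL-Analysis.Harmonic_Numbers"
begin

(*
  Let rho k = phi k / k.  For coprime a, b with 2 dvd a and 3 dvd b, Dickson's conjecture
  applies to the admissible forms m, n, 2am + 1, 2am + 3 subject to bn = am + 1, giving twin
  primes p = 2am + 1 with p - 1 = 2am and p + 1 = 2bn for primes m, n -> infinity.  Then
  phi(p + 1) / phi(p - 1) = phi(2b) (n - 1) / (phi(2a) (m - 1)) tends to rho(2b) / rho(2a).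
  Taking a = 2, b = 3P or a = 2P, b = 3 with P coprime to 6, this limit is (2/3) rho P or
  (2/3) / rho P, and such rho P are dense in [0, 1]: the products of 1 - 1/p over the primes
  K < p <= N tend to 0 as N grows (sigma(N!) phi(N!) <= (N!)^2 and sigma(N!) >= N! H_N),
  in steps of relative size at most 1/K.
*)

definition totient_ratio :: "nat \<Rightarrow> real" where
  "totient_ratio n = real (totient n) / real n"

lemma totient_ratio_mult_coprime:
  "coprime m n \<Longrightarrow> totient_ratio (m * n) = totient_ratio m * totient_ratio n"
  by (simp add: totient_ratio_def totient_mult_coprime)

lemma totient_mult_prime:
  assumes "prime n" "\<not> n dvd m"
  shows "totient (m * n) = totient m * (n - 1)"
proof -
  have "coprime m n"
    using assms by (metis prime_imp_coprime coprime_commute)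
  then show ?thesis
    using assms by (simp add: totient_mult_coprime totient_prime)
qed

lemma totient_mult_dvd:
  assumes "e dvd m"
  shows "totient (m * e) = e * totient m"
proof (cases "m = 0")
  case False
  then have "e > 0"
    using assms by (auto intro: Nat.gr0I)
  moreover have "totient (m * e) * totient e = totient m * totient e * e"
    using totient_gcd[of m e] assms by (simp add: gcd_nat.absorb2)
  ultimately show ?thesis by simp
qed simp

lemma divisor_sum_mult_totient_le: "(\<Sum>e | e dvd m. e) * totient m \<le> m * m"
proof (cases "m = 0")
  case False
  have "(\<Sum>e | e dvd m. e) * totient m = (\<Sum>e | e dvd m. totient (m * e))"
    by (simp add: sum_distrib_right totient_mult_dvd)
  also have "\<dots> = (\<Sum>k \<in> (\<lambda>e. m * e) ` {e. e dvd m}. totient k)"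
    using False by (subst sum.reindex) (auto simp: inj_on_def)
  also have "\<dots> \<le> (\<Sum>k | k dvd m * m. totient k)"
    using False by (intro sum_mono2) auto
  also have "\<dots> = m * m"
    by (rule totient_divisor_sum)
  finally show ?thesis .
qed simp

lemma fact_mult_harm_le_divisor_sum: "real (fact N) * harm N \<le> (\<Sum>e | e dvd fact N. real e)"
proof -
  define m :: nat where "m = fact N"
  have dvd: "n dvd m" if "n \<in> {1..N}" for n
    using that by (simp add: m_def dvd_fact)
  have "real m * harm N = (\<Sum>n = 1..N. real (m div n))"
    unfolding harm_def sum_distrib_left
    by (intro sum.cong refl) (simp add: dvd real_of_nat_div field_simps)
  also have "\<dots> = (\<Sum>e \<in> (\<lambda>n. m div n) ` {1..N}. real e)"
    by (subst sum.reindex)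
       (auto simp: m_def intro!: inj_onI dvd_div_eq_2[of "fact N"] dvd_fact)
  also have "\<dots> \<le> (\<Sum>e | e dvd m. real e)"
    by (intro sum_mono2) (auto simp: m_def dvd_fact div_dvd_iff_mult)
  finally show ?thesis by (simp add: m_def)
qed

definition sieve_density :: "nat \<Rightarrow> nat \<Rightarrow> real" where
  "sieve_density K N = (\<Prod>p | prime p \<and> K < p \<and> p \<le> N. 1 - 1 / real p)"

lemma sieve_density_pos: "sieve_density K N > 0"
  unfolding sieve_density_def by (rule prod_pos) (auto dest: prime_gt_1_nat)

lemma sieve_density_le_1: "sieve_density K N \<le> 1"
  unfolding sieve_density_def by (rule prod_le_1) (auto dest: prime_gt_1_nat)

lemma sieve_density_eq_1: "N \<le> K \<Longrightarrow> sieve_density K N = 1"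
  unfolding sieve_density_def by (rule prod.neutral) auto

lemma sieve_density_mult:
  assumes "K \<le> M" "M \<le> N"
  shows "sieve_density K M * sieve_density M N = sieve_density K N"
proof -
  have "{p. prime p \<and> K < p \<and> p \<le> N} =
          {p. prime p \<and> K < p \<and> p \<le> M} \<union> {p. prime p \<and> M < p \<and> p \<le> N}"
    using assms by auto
  then show ?thesis
    unfolding sieve_density_def by (simp add: prod.union_disjoint[symmetric] disjoint_iff)
qed

lemma sieve_density_Suc_ge:
  assumes "K > 0"
  shows "sieve_density K N - 1 / real K \<le> sieve_density K (Suc N)"
proof (cases "prime (Suc N) \<and> K < Suc N")
  case True
  then have "{p. prime p \<and> K < p \<and> p \<le> Suc N} = insert (Suc N) {p. prime p \<and> K < p \<and> p \<le> N}"
    by (auto simp: le_Suc_eq)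
  then have "sieve_density K (Suc N) = (1 - 1 / real (Suc N)) * sieve_density K N"
    unfolding sieve_density_def by simp
  also have "\<dots> \<ge> (1 - 1 / real K) * sieve_density K N"
    using True assms sieve_density_pos[of K N] by (intro mult_right_mono) (auto simp: frac_le)
  finally have "sieve_density K N - sieve_density K N / real K \<le> sieve_density K (Suc N)"
    by (simp add: algebra_simps)
  moreover have "sieve_density K N / real K \<le> 1 / real K"
    using sieve_density_le_1[of K N] by (simp add: divide_right_mono)
  ultimately show ?thesis by linarith
next
  case False
  then have "{p. prime p \<and> K < p \<and> p \<le> Suc N} = {p. prime p \<and> K < p \<and> p \<le> N}"
    by (auto simp: le_Suc_eq)
  then show ?thesis
    unfolding sieve_density_def by simp
qed

lemma totient_ratio_prod_primes_between:
  "totient_ratio (\<Prod>{p. prime p \<and> K < p \<and> p \<le> N}) = sieve_density K N"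
proof -
  define S where "S = {p. prime p \<and> K < p \<and> p \<le> N}"
  have "prime_factors (\<Prod>S) = S"
    by (auto simp: S_def prime_factors_prod prime_prime_factors)
  moreover have "\<Prod>S > 0"
    by (auto simp: S_def prime_gt_0_nat intro: prod_pos)
  ultimately show ?thesis
    using totient_formula2[of "\<Prod>S"] by (simp add: totient_ratio_def sieve_density_def S_def)
qed

lemma sieve_density_0_le_inverse_harm:
  assumes "N > 0"
  shows "sieve_density 0 N \<le> 1 / harm N"
proof -
  define m :: nat where "m = fact N"
  have "harm N > (0::real)"
    using assms by (simp add: harm_pos)
  have "prime_factors m = {p. prime p \<and> 0 < p \<and> p \<le> N}"
    by (auto simp: m_def prime_factors_fact prime_ge_2_nat prime_gt_0_nat)
  then have ratio: "real (totient m) = real m * sieve_density 0 N"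
    using totient_formula2[of m] by (simp add: sieve_density_def)
  have "real m * harm N * real (totient m) \<le> (\<Sum>e | e dvd m. real e) * real (totient m)"
    using fact_mult_harm_le_divisor_sum[of N] by (simp add: m_def mult_right_mono)
  also have "\<dots> \<le> real m * real m"
    using divisor_sum_mult_totient_le[of m] by (simp flip: of_nat_sum of_nat_mult)
  finally have "harm N * sieve_density 0 N \<le> 1"
    unfolding ratio by (simp add: m_def algebra_simps power2_eq_square)
  with \<open>harm N > 0\<close> show ?thesis
    by (simp add: field_simps)
qed

lemma sieve_density_eventually_less:
  assumes "\<eta> > 0"
  shows "\<exists>N. sieve_density K N < \<eta>"
proof -
  have "\<forall>\<^sub>F N in sequentially. 1 / (\<eta> * sieve_density 0 K) < harm N \<and> K < N"
    using harm_at_top unfolding filterlim_at_top_dense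
    by (intro eventually_conj eventually_gt_at_top) auto
  then obtain N where N: "1 / (\<eta> * sieve_density 0 K) < harm N" "K < N"
    by (auto simp: eventually_sequentially)
  have "sieve_density 0 K * sieve_density K N = sieve_density 0 N"
    using N by (intro sieve_density_mult) auto
  also have "\<dots> \<le> 1 / harm N"
    using N by (intro sieve_density_0_le_inverse_harm) auto
  also have "\<dots> < \<eta> * sieve_density 0 K"
    using N assms sieve_density_pos[of 0 K]
    by (simp add: field_simps)
  finally show ?thesis
    using sieve_density_pos[of 0 K] by (auto simp: mult.commute)
qed

lemma exists_crossing_with_bounded_steps:
  fixes g :: "nat \<Rightarrow> real"
  assumes "c \<le> g 0" "g N < c" "\<And>n. g n - d \<le> g (Suc n)"
  shows "\<exists>n. c - d \<le> g n \<and> g n < c"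
  using assms(2)
proof (induction N)
  case (Suc N)
  show ?case
  proof (cases "g N < c")
    case False
    then show ?thesis
      using Suc.prems assms(3)[of N] by (intro exI[of _ "Suc N"]) auto
  qed (rule Suc.IH)
qed (use assms(1) in simp)

lemma totient_ratio_dense:
  fixes y \<delta> :: real
  assumes "M > 0" "0 \<le> y" "y \<le> 1" "\<delta> > 0"
  shows "\<exists>P. coprime P M \<and> \<bar>totient_ratio P - y\<bar> < \<delta>"
proof (cases "1 - y < \<delta>")
  case True
  then show ?thesis
    using assms by (intro exI[of _ 1]) (auto simp: totient_ratio_def)
next
  case False
  define K :: nat where "K = M + nat \<lceil>2 / \<delta>\<rceil>"
  have "K > 0" "2 / \<delta> \<le> real K"
    using assms(1) by (auto simp: K_def) linarith
  then have "1 / real K \<le> \<delta> / 2"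
    using assms(4) by (simp add: field_simps)
  define c where "c = y + \<delta> / 2"
  obtain N where "sieve_density K N < c"
    using sieve_density_eventually_less[of c K] assms by (auto simp: c_def)
  moreover have "c \<le> sieve_density K 0"
    using False assms(4) by (simp add: sieve_density_eq_1 c_def)
  ultimately obtain n where n: "c - 1 / real K \<le> sieve_density K n" "sieve_density K n < c"
    using exists_crossing_with_bounded_steps sieve_density_Suc_ge[OF \<open>K > 0\<close>] by metis
  define P where "P = \<Prod>{p. prime p \<and> K < p \<and> p \<le> n}"
  have "coprime p M" if "prime p" "K < p" for p
    using that assms(1) by (intro prime_imp_coprime) (auto simp: K_def dest: dvd_imp_le)
  then have "coprime P M"
    unfolding P_def by (intro prod_coprime_left) auto
  moreover have "\<bar>totient_ratio P - y\<bar> < \<delta>"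
    using n \<open>1 / real K \<le> \<delta> / 2\<close> assms
    by (simp add: P_def totient_ratio_prod_primes_between c_def abs_less_iff)
  ultimately show ?thesis by blast
qed

lemma card_roots_mod_prime_linear:
  fixes q c d :: int
  assumes "prime q" "\<not> (q dvd c \<and> q dvd d)"
  shows "card {r \<in> {0..<q}. q dvd c * r + d} \<le> (if q dvd c then 0 else 1)"
proof (cases "q dvd c")
  case True
  then have "{r \<in> {0..<q}. q dvd c * r + d} = {}"
    using assms(2) by (auto simp: dvd_add_right_iff)
  then show ?thesis
    using True by (simp only: card.empty)
next
  case False
  have "r1 = r2" if "r1 \<in> {0..<q}" "r2 \<in> {0..<q}" "q dvd c * r1 + d" "q dvd c * r2 + d" for r1 r2
  proof -
    have "q dvd c * (r1 - r2)"
      using dvd_diff[OF that(3,4)] by (simp add: algebra_simps)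
    then have "[r1 = r2] (mod q)"
      using False assms(1) by (simp add: prime_dvd_mult_iff cong_iff_dvd_diff)
    then show ?thesis
      using that(1,2) by (simp add: cong_def)
  qed
  then have "card {r \<in> {0..<q}. q dvd c * r + d} \<le> Suc 0"
    by (subst card_le_Suc0_iff_eq) (auto intro: finite_subset[of _ "{0..<q}"])
  then show ?thesis
    using False by simp
qed

lemma exists_nonroot_mod_prime_linear_forms:
  fixes q :: int and cs :: "(int \<times> int) list"
  assumes "prime q" "\<forall>(c, d) \<in> set cs. \<not> (q dvd c \<and> q dvd d)"
    and "length (filter (\<lambda>(c, d). \<not> q dvd c) cs) < q"
  shows "\<exists>t. \<forall>(c, d) \<in> set cs. \<not> q dvd c * t + d"
proof -
  define roots where "roots cd = {r \<in> {0..<q}. q dvd fst cd * r + snd cd}" for cd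
  have "card (\<Union>cd \<in> set cs. roots cd) \<le> length (filter (\<lambda>(c, d). \<not> q dvd c) cs)"
    using assms(2)
  proof (induction cs)
    case (Cons cd cs)
    have "card (\<Union>cd' \<in> set (cd # cs). roots cd') \<le> card (roots cd) + card (\<Union>cd' \<in> set cs. roots cd')"
      by (simp add: card_Un_le)
    also have "\<dots> \<le> (if q dvd fst cd then 0 else 1) + length (filter (\<lambda>(c, d). \<not> q dvd c) cs)"
      using Cons card_roots_mod_prime_linear[OF assms(1), of "fst cd" "snd cd"]
      by (intro add_mono) (auto simp: roots_def split: prod.splits)
    finally show ?case
      by (auto split: prod.splits if_splits)
  qed simp
  then have "card (\<Union>cd \<in> set cs. roots cd) < card {0..<q}"
    using assms(3) by simp
  moreover have "finite (\<Union>cd \<in> set cs. roots cd)"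
    unfolding roots_def by (auto intro: finite_subset[of _ "{0..<q}"])
  ultimately have "\<not> {0..<q} \<subseteq> (\<Union>cd \<in> set cs. roots cd)"
    using card_mono leD by blast
  then obtain t where "t \<in> {0..<q}" "\<And>cd. cd \<in> set cs \<Longrightarrow> t \<notin> roots cd"
    by blast
  then show ?thesis
    by (intro exI[of _ t]) (auto simp: roots_def)
qed

lemma twin_prime_forms_admissible:
  fixes a b u v q :: int
  assumes bezout: "b * v - a * u = 1" and "even a" "3 dvd b" "prime q"
  shows "\<exists>t. \<forall>(c, d) \<in> set [(b, u), (a, v), (2 * a * b, 2 * a * u + 1), (2 * a * b, 2 * a * u + 3)].
           \<not> q dvd c * t + d"
proof (rule exists_nonroot_mod_prime_linear_forms[OF \<open>prime q\<close>])
  have "q \<ge> 2"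
    using \<open>prime q\<close> by (rule prime_ge_2_int)
  have no_common_factor: False if "q dvd x" "q dvd y" "x * x' + y * y' = 1" for x y x' y'
  proof -
    have "q dvd x * x' + y * y'"
      using that(1,2) by simp
    then show False
      using that(3) \<open>q \<ge> 2\<close> by (simp add: zdvd_imp_le)
  qed
  have ab: "\<not> (q dvd a \<and> q dvd b)"
    using no_common_factor[of b a v "-u"] bezout by (auto simp: algebra_simps)
  have split_2ab: "q dvd 2 * a * b \<longleftrightarrow> q dvd 2 \<or> q dvd a \<or> q dvd b"
    using \<open>prime q\<close> by (simp add: prime_dvd_mult_iff)
  have "\<not> (q dvd 2 * a * b \<and> q dvd 2 * a * u + 1)"
  proof
    assume dvds: "q dvd 2 * a * b \<and> q dvd 2 * a * u + 1"
    then consider "q dvd 2 * a" | "q dvd b"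
      using split_2ab by auto
    then show False
    proof cases
      case 1
      then show False
        using no_common_factor[of "2 * a" "2 * a * u + 1" "-u" 1] dvds by (simp add: algebra_simps)
    next
      case 2
      then show False
        using no_common_factor[of b "2 * a * u + 1" "2 * v" "-1"] dvds bezout by (simp add: algebra_simps)
    qed
  qed
  moreover have "\<not> (q dvd 2 * a * b \<and> q dvd 2 * a * u + 3)"
  proof
    assume dvds: "q dvd 2 * a * b \<and> q dvd 2 * a * u + 3"
    then consider "q dvd 2" | "q dvd a" | "q dvd b"
      using split_2ab by auto
    then show False
    proof cases
      case 1
      then show False
        using no_common_factor[of 2 "2 * a * u + 3" "-(a * u + 1)" 1] dvds by (simp add: algebra_simps)
    next
      case 2
      then have "q dvd 3"
        using dvds by (metis dvd_add_right_iff dvd_mult dvd_mult2)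
      then show False
        using 2 ab \<open>3 dvd b\<close> dvd_trans by blast
    next
      case 3
      then show False
        using no_common_factor[of b "2 * a * u + 3" "-2 * v" 1] dvds bezout by (simp add: algebra_simps)
    qed
  qed
  ultimately show "\<forall>(c, d) \<in> set [(b, u), (a, v), (2 * a * b, 2 * a * u + 1), (2 * a * b, 2 * a * u + 3)].
           \<not> (q dvd c \<and> q dvd d)"
    using no_common_factor[of b u v "-a"] no_common_factor[of a v "-u" b] bezout
    by (auto simp: algebra_simps)
  have "q \<noteq> 4"
    using \<open>prime q\<close> by auto
  then consider "q = 2" | "q = 3" | "q \<ge> 5"
    using \<open>q \<ge> 2\<close> by linarith
  then show "int (length (filter (\<lambda>(c, d). \<not> q dvd c)
          [(b, u), (a, v), (2 * a * b, 2 * a * u + 1), (2 * a * b, 2 * a * u + 3)])) < q"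
  proof cases
    case 1
    then show ?thesis
      using ab \<open>even a\<close> by auto
  next
    case 2
    then show ?thesis
      using ab \<open>3 dvd b\<close> by auto
  next
    case 3
    then show ?thesis
      using length_filter_le[of "\<lambda>(c, d). \<not> q dvd c"
          "[(b, u), (a, v), (2 * a * b, 2 * a * u + 1), (2 * a * b, 2 * a * u + 3)]"] by simp
  qed
qed

lemma dickson_twin_prime_forms:
  fixes a b N :: nat
  assumes "dickson_conjecture" "coprime a b" "even a" "3 dvd b"
  shows "\<exists>m n. N < m \<and> N < n \<and> prime m \<and> prime n \<and>
           prime (2 * a * m + 1) \<and> prime (2 * a * m + 3) \<and> b * n = a * m + 1"
proof -
  define A B where "A = int a" and "B = int b"
  have "A > 0" "B > 0"
    using assms(2-4) by (auto simp: A_def B_def intro!: Nat.gr0I)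
  have "even A" "3 dvd B"
    using assms(3,4) unfolding A_def B_def by presburger+
  obtain u' v where "u' * A + v * B = 1"
    using bezout_int[of A B] assms(2) by (auto simp: A_def B_def)
  define u where "u = - u'"
  \<comment> \<open>so that m = u + B t and n = v + A t satisfy B n = A m + 1\<close>
  have bezout: "B * v - A * u = 1"
    using \<open>u' * A + v * B = 1\<close> by (simp add: u_def algebra_simps)
  define fs :: "int poly list" where
    "fs = [[:u, B:], [:v, A:], [:2 * A * u + 1, 2 * A * B:], [:2 * A * u + 3, 2 * A * B:]]"
  have "\<forall>f \<in> set fs. degree f = 1 \<and> lead_coeff f > 0"
    using \<open>A > 0\<close> \<open>B > 0\<close> by (simp add: fs_def)
  moreover have "\<exists>t. \<not> q dvd poly (prod_list fs) t" if "prime q" for q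
  proof -
    obtain t where "\<forall>(c, d) \<in> set [(B, u), (A, v), (2 * A * B, 2 * A * u + 1),
                                     (2 * A * B, 2 * A * u + 3)]. \<not> q dvd c * t + d"
      using twin_prime_forms_admissible[OF bezout \<open>even A\<close> \<open>3 dvd B\<close> \<open>prime q\<close>] by blast
    moreover have "poly (prod_list fs) t = (B * t + u) * ((A * t + v) *
        ((2 * A * B * t + (2 * A * u + 1)) * (2 * A * B * t + (2 * A * u + 3))))"
      by (simp add: fs_def algebra_simps)
    ultimately show ?thesis
      using \<open>prime q\<close> by (auto simp: prime_dvd_mult_iff intro!: exI[of _ t])
  qed
  ultimately have "infinite {t. t > 0 \<and> (\<forall>f \<in> set fs. prime (poly f t))}"
    using assms(1) unfolding dickson_conjecture_def by blast
  moreover have "finite {0..int N + \<bar>u\<bar> + \<bar>v\<bar>}"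
    by simp
  ultimately have "infinite ({t. t > 0 \<and> (\<forall>f \<in> set fs. prime (poly f t))} - {0..int N + \<bar>u\<bar> + \<bar>v\<bar>})"
    by (simp add: Diff_infinite_finite)
  then obtain t where t: "t > 0" "\<forall>f \<in> set fs. prime (poly f t)" "t \<notin> {0..int N + \<bar>u\<bar> + \<bar>v\<bar>}"
    using infinite_imp_nonempty by blast
  define m where "m = nat (u + B * t)"
  define n where "n = nat (v + A * t)"
  have "B * t \<ge> t" "A * t \<ge> t"
    using \<open>A > 0\<close> \<open>B > 0\<close> \<open>t > 0\<close> by simp_all
  moreover have "t > int N + \<bar>u\<bar> + \<bar>v\<bar>"
    using t(1,3) by auto
  ultimately have "u + B * t > int N" "v + A * t > int N"
    by (smt (verit) abs_ge_zero abs_ge_minus_self)+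
  then have m: "int m = u + B * t" "N < m" and n: "int n = v + A * t" "N < n"
    by (auto simp: m_def n_def)
  have "prime (poly [:u, B:] t)" "prime (poly [:v, A:] t)"
    "prime (poly [:2 * A * u + 1, 2 * A * B:] t)" "prime (poly [:2 * A * u + 3, 2 * A * B:] t)"
    using t(2) by (simp_all add: fs_def)
  moreover have "poly [:u, B:] t = int m" "poly [:v, A:] t = int n"
    "poly [:2 * A * u + 1, 2 * A * B:] t = int (2 * a * m + 1)"
    "poly [:2 * A * u + 3, 2 * A * B:] t = int (2 * a * m + 3)"
    using m n by (simp_all add: A_def B_def algebra_simps)
  moreover have "int (b * n) = int (a * m + 1)"
    using bezout m n by (simp add: A_def B_def algebra_simps)
  ultimately show ?thesis
    using m(2) n(2) by (intro exI[of _ m] exI[of _ n]) (simp only: prime_nat_int_transfer of_nat_eq_iff)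
qed

lemma totient_quotient_prime_multiples:
  fixes a b m n :: nat
  assumes "prime m" "prime n" "2 * a < m" "2 * b < n" "b * n = a * m + 1" "a > 0"
  shows "\<bar>real (totient (2 * b * n)) / real (totient (2 * a * m))
            - totient_ratio (2 * b) / totient_ratio (2 * a)\<bar>
         = totient_ratio (2 * b) / totient_ratio (2 * a) * \<bar>1 + real a - real b\<bar> / real a
             / (real m - 1)"
proof -
  have "b > 0"
    using assms(5) by (auto intro: Nat.gr0I)
  have "\<not> m dvd 2 * a" "\<not> n dvd 2 * b"
    using assms(3,4) \<open>a > 0\<close> \<open>b > 0\<close> by (auto dest: dvd_imp_le)
  then have totients: "totient (2 * a * m) = totient (2 * a) * (m - 1)"
    "totient (2 * b * n) = totient (2 * b) * (n - 1)"
    using totient_mult_prime assms(1,2) by simp_all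
  have "real m - 1 > 0"
    using prime_gt_1_nat[OF assms(1)] by simp
  define F where "F = real (totient (2 * b)) / real (totient (2 * a))"
  have ratio: "real (totient (2 * b * n)) / real (totient (2 * a * m)) = F * (real n - 1) / (real m - 1)"
    unfolding totients using prime_gt_1_nat[OF assms(1)] prime_gt_1_nat[OF assms(2)]
    by (simp add: F_def)
  have limit: "totient_ratio (2 * b) / totient_ratio (2 * a) = F * real a / real b"
    using \<open>a > 0\<close> \<open>b > 0\<close> by (simp add: totient_ratio_def F_def field_simps)
  have "real (totient (2 * b * n)) / real (totient (2 * a * m)) - totient_ratio (2 * b) / totient_ratio (2 * a)
      = F * (real b * (real n - 1) - real a * (real m - 1)) / (real b * (real m - 1))"
    unfolding ratio limit using \<open>b > 0\<close> \<open>real m - 1 > 0\<close> by (simp add: field_simps)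
  also have "real b * (real n - 1) - real a * (real m - 1) = 1 + real a - real b"
    using arg_cong[OF assms(5), of real] by (simp add: algebra_simps)
  finally have deviation: "real (totient (2 * b * n)) / real (totient (2 * a * m))
      - totient_ratio (2 * b) / totient_ratio (2 * a) = F * (1 + real a - real b) / (real b * (real m - 1))" .
  have "F \<ge> 0"
    by (simp add: F_def)
  then show ?thesis
    unfolding deviation unfolding limit using \<open>a > 0\<close> \<open>b > 0\<close> \<open>real m - 1 > 0\<close>
    by (simp add: abs_mult)
qed

lemma dickson_twin_prime_totient_quotient_approx:
  fixes a b :: nat and \<epsilon> :: real
  assumes "dickson_conjecture" "coprime a b" "even a" "3 dvd b" "\<epsilon> > 0"
  shows "\<exists>p. prime p \<and> prime (p + 2) \<and>
           \<bar>real (totient (p + 1)) / real (totient (p - 1))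
              - totient_ratio (2 * b) / totient_ratio (2 * a)\<bar> < \<epsilon>"
proof -
  have "a > 0"
    using assms(2-4) by (auto intro!: Nat.gr0I)
  define D where "D = totient_ratio (2 * b) / totient_ratio (2 * a) * \<bar>1 + real a - real b\<bar> / real a"
  define N where "N = 2 * a + 2 * b + nat \<lceil>D / \<epsilon>\<rceil> + 1"
  obtain m n where mn: "N < m" "N < n" "prime m" "prime n"
    "prime (2 * a * m + 1)" "prime (2 * a * m + 3)" "b * n = a * m + 1"
    using dickson_twin_prime_forms[OF assms(1-4), of N] by auto
  define p where "p = 2 * a * m + 1"
  have p: "p - 1 = 2 * a * m" "p + 1 = 2 * b * n" "p + 2 = 2 * a * m + 3"
    using mn(7) by (simp_all add: p_def)
  have "2 * a < m" "2 * b < n"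
    using mn(1,2) by (simp_all add: N_def)
  then have "\<bar>real (totient (p + 1)) / real (totient (p - 1))
              - totient_ratio (2 * b) / totient_ratio (2 * a)\<bar> = D / (real m - 1)"
    unfolding p(1,2) D_def by (rule totient_quotient_prime_multiples[OF mn(3,4) _ _ mn(7) \<open>a > 0\<close>])
  also have "\<dots> < \<epsilon>"
  proof -
    have "D \<ge> 0"
      by (simp add: D_def totient_ratio_def)
    moreover have "D / \<epsilon> < real m - 1"
      using mn(1) real_nat_ceiling_ge[of "D / \<epsilon>"] unfolding N_def by linarith
    moreover have "real m - 1 > 0"
      using prime_gt_1_nat[OF mn(3)] by simp
    ultimately show ?thesis
      using assms(5) by (simp add: pos_divide_less_eq mult.commute)
  qed
  finally have "\<bar>real (totient (p + 1)) / real (totient (p - 1))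
              - totient_ratio (2 * b) / totient_ratio (2 * a)\<bar> < \<epsilon>" .
  moreover have "prime p" "prime (p + 2)"
    using mn(5,6) unfolding p(3) by (simp_all add: p_def)
  ultimately show ?thesis
    by blast
qed

lemma totient_ratio_quotients_dense:
  fixes x \<epsilon> :: real
  assumes "x \<ge> 0" "\<epsilon> > 0"
  shows "\<exists>a b. coprime a b \<and> even a \<and> 3 dvd b \<and>
           \<bar>totient_ratio (2 * b) / totient_ratio (2 * a) - x\<bar> < \<epsilon>"
proof -
  have mult_4: "totient_ratio (4 * P) = totient_ratio P / 2" and
       mult_6: "totient_ratio (6 * P) = totient_ratio P / 3" if "coprime P 6" for P
  proof -
    have "coprime 2 P" "coprime 3 P"
      using that coprime_mult_right_iff[of P 2 3] by (simp_all add: coprime_commute)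
    then have "coprime 4 P" "coprime 6 P"
      using coprime_mult_left_iff[of 2 2 P] coprime_mult_left_iff[of 2 3 P] by simp_all
    then show "totient_ratio (4 * P) = totient_ratio P / 2" "totient_ratio (6 * P) = totient_ratio P / 3"
      by (simp_all add: totient_ratio_mult_coprime) (simp_all add: totient_ratio_def)
  qed
  have ratio_6: "totient_ratio 6 = 1 / 3" and ratio_4: "totient_ratio 4 = 1 / 2"
    by (simp_all add: totient_ratio_def)
  show ?thesis
  proof (cases "x \<le> 2 / 3")
    case True
    then obtain P where P: "coprime P 6" "\<bar>totient_ratio P - 3 * x / 2\<bar> < \<epsilon>"
      using totient_ratio_dense[of 6 "3 * x / 2" \<epsilon>] assms by auto
    then have "coprime 2 (3 * P)"
      using coprime_mult_right_iff[of P 2 3] by (simp add: coprime_commute)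
    moreover have "totient_ratio (2 * (3 * P)) / totient_ratio (2 * 2) - x
        = 2 / 3 * (totient_ratio P - 3 * x / 2)"
      by (simp add: mult_6[OF P(1)] ratio_4)
    then have "\<bar>totient_ratio (2 * (3 * P)) / totient_ratio (2 * 2) - x\<bar> < \<epsilon>"
      using P(2) assms(2) by (simp only: abs_mult) simp
    ultimately show ?thesis
      by fastforce
  next
    case False
    define y where "y = 2 / (3 * x)"
    have "0 < y" "y < 1" "x = 2 / (3 * y)"
      using False by (auto simp: y_def field_simps)
    have "isCont (\<lambda>r. 2 / (3 * r)) y"
      using \<open>0 < y\<close> by (intro continuous_intros) auto
    then obtain \<delta> where "\<delta> > 0" and \<delta>: "\<And>r. \<bar>r - y\<bar> < \<delta> \<Longrightarrow> \<bar>2 / (3 * r) - x\<bar> < \<epsilon>"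
      using assms(2) \<open>x = 2 / (3 * y)\<close> unfolding continuous_at_eps_delta dist_real_def by blast
    obtain P where P: "coprime P 6" "\<bar>totient_ratio P - y\<bar> < \<delta>"
      using totient_ratio_dense[of 6 y \<delta>] \<open>0 < y\<close> \<open>y < 1\<close> \<open>\<delta> > 0\<close> by auto
    then have "coprime (2 * P) 3"
      using coprime_mult_right_iff[of P 2 3] by (simp add: coprime_commute)
    moreover have "totient_ratio (2 * 3) / totient_ratio (2 * (2 * P)) = 2 / (3 * totient_ratio P)"
      by (simp add: mult_4[OF P(1)] ratio_6)
    then have "\<bar>totient_ratio (2 * 3) / totient_ratio (2 * (2 * P)) - x\<bar> < \<epsilon>"
      using \<delta>[OF P(2)] by (simp only:)
    ultimately show ?thesis
      by fastforce
  qed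
qed

theorem theorem1:
  assumes "dickson_conjecture"
  shows "\<forall>x :: real. x \<ge> 0 \<longrightarrow> (\<forall>\<epsilon> > 0. \<exists>p :: nat. prime p \<and> prime (p + 2) \<and>
           \<bar>real (totient (p + 1)) / real (totient (p - 1)) - x\<bar> < \<epsilon>)"
proof (intro allI impI)
  fix x \<epsilon> :: real
  assume "x \<ge> 0" "\<epsilon> > 0"
  then obtain a b where ab: "coprime a b" "even a" "3 dvd b"
    "\<bar>totient_ratio (2 * b) / totient_ratio (2 * a) - x\<bar> < \<epsilon> / 2"
    using totient_ratio_quotients_dense[of x "\<epsilon> / 2"] by auto
  obtain p where p: "prime p" "prime (p + 2)"
    "\<bar>real (totient (p + 1)) / real (totient (p - 1)) - totient_ratio (2 * b) / totient_ratio (2 * a)\<bar> < \<epsilon> / 2"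
    using dickson_twin_prime_totient_quotient_approx[OF assms ab(1-3), of "\<epsilon> / 2"] \<open>\<epsilon> > 0\<close> by auto
  have "\<bar>real (totient (p + 1)) / real (totient (p - 1)) - x\<bar> < \<epsilon>"
    using ab(4) p(3) by linarith
  with p(1,2) show "\<exists>p. prime p \<and> prime (p + 2) \<and>
      \<bar>real (totient (p + 1)) / real (totient (p - 1)) - x\<bar> < \<epsilon>"
    by blast
qed

end
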